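(* Let $K$ and $S$ be compact Hausdorff spaces and let $T\colon C(K)\to C(S)$ be a linear isometric embedding. Let $F_T\colon S\to C(K)^*$ be $F_T(s):=T^*(\delta_s)$, i.e. $\langle f,F_T(s)\rangle=(Tf)(s)$. Then $T$ is a U-embedding if and only if there exist a closed subset $S_0\subset S$, a homeomorphism $h\colon K\to S_0$ and a continuous function $\varepsilon\colon K\to\{-1,1\}$ such that (i) $F_T(h(k))=\varepsilon(k)\delta_k$ for every $k\in K$, and (ii) $\|F_T(s)\|<1$ for every $s\in S\setminus S_0$.
   Context: $C(K)$, $C(S)$ carry the sup norm; $C(K)^*$ is identified with regular Borel signed measures on $K$ with total variation norm, $\delta_k$ being the Dirac measure at $k$. A linear isometry $T\colon X\to Y$ is a U-embedding if every $x^*\in X^*$ has a unique $y^*\in Y^*$ with $T^*(y^* )=x^*$ and $\|y^*\|=\|x^*\|$. *)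

theory Defs
  imports "HOL-Analysis.Analysis"
begin

text \<open>C(K) is modelled by the bounded continuous functions on K (equal to C(K) for compact K),
  with the sup norm; the dual space X* by bounded linear functionals X \<Rightarrow>L real with the operator norm.\<close>

definition dirac :: "'a::topological_space \<Rightarrow> (('a, real) bcontfun \<Rightarrow>\<^sub>L real)" where
  "dirac k = Blinfun (\<lambda>f. apply_bcontfun f k)"

definition FT :: "(('a::topological_space, real) bcontfun \<Rightarrow> ('b::topological_space, real) bcontfun)
    \<Rightarrow> 'b \<Rightarrow> (('a, real) bcontfun \<Rightarrow>\<^sub>L real)" where
  "FT T s = Blinfun (\<lambda>f. apply_bcontfun (T f) s)"

definition linear_isometry :: "('a::real_normed_vector \<Rightarrow> 'b::real_normed_vector) \<Rightarrow> bool" where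
  "linear_isometry T \<longleftrightarrow> linear T \<and> (\<forall>x. norm (T x) = norm x)"

definition U_embedding :: "('a::real_normed_vector \<Rightarrow> 'b::real_normed_vector) \<Rightarrow> bool" where
  "U_embedding T \<longleftrightarrow> linear_isometry T \<and>
     (\<forall>x'::'a \<Rightarrow>\<^sub>L real. \<exists>!y'::'b \<Rightarrow>\<^sub>L real.
        (\<lambda>x. blinfun_apply y' (T x)) = blinfun_apply x' \<and> norm y' = norm x')"

end

theory Submission
  imports Defs
begin

text \<open>
  By Holsztynski's theorem, for every \<open>k \<in> K\<close> there are \<open>s \<in> S\<close> and \<open>\<sigma> = \<plusminus>1\<close>
  with \<open>F\<^sub>T(s) = \<sigma> \<delta>\<^sub>k\<close>: the images under \<open>T\<close> of the functions of norm 1 peaking at \<open>k\<close> share,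
  by an averaging argument and compactness of \<open>S\<close>, a common value \<open>\<sigma>\<close> at some point \<open>s\<close>, and this
  forces \<open>(T f)(s) = \<sigma> f(k)\<close>. Each such \<open>\<sigma> \<delta>\<^sub>s\<close> is a norm-preserving extension of \<open>\<delta>\<^sub>k\<close>, so for a
  U-embedding the pair \<open>(s, \<sigma>) = (h(k), \<epsilon>(k))\<close> is unique. Uniqueness makes the graph of \<open>h\<close> closed,
  hence \<open>h\<close> continuous, and \<open>h\<close> is injective because \<open>C(K)\<close> separates points. If \<open>\<parallel>F\<^sub>T(s)\<parallel> = 1\<close> for
  some \<open>s \<notin> h(K)\<close>, then \<open>\<delta>\<^sub>s\<close> and \<open>g \<mapsto> F\<^sub>T(s)(\<epsilon> \<cdot> g \<circ> h)\<close> are two different norm-preserving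
  extensions of \<open>F\<^sub>T(s)\<close>.

  Sufficiency. \<open>g \<mapsto> x'(\<epsilon> \<cdot> g \<circ> h)\<close> is a norm-preserving extension of \<open>x'\<close>, and any norm-preserving
  extension \<open>y\<close> of \<open>x'\<close> annihilates the functions vanishing on \<open>S\<^sub>0\<close>, so it is this one. Indeed,
  pick \<open>f\<^sub>n\<close> in the unit ball with \<open>y(T f\<^sub>n) > \<parallel>y\<parallel> - 2\<^sup>-\<^sup>n\<^sup>-\<^sup>1\<close>. Off \<open>S\<^sub>0\<close> the values \<open>|T f\<^sub>n|\<close> stay
  below \<open>\<parallel>F\<^sub>T(s)\<parallel> < 1\<close>, so by compactness \<open>M |g| \<le> 1 + \<Sum>\<^sub>n\<^sub><\<^sub>N (1 - |T f\<^sub>n|)\<close> for some \<open>N\<close>.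
  Splitting \<open>M g\<close> accordingly into pieces \<open>v\<^sub>n\<close> with \<open>\<parallel>T f\<^sub>n + v\<^sub>n\<parallel> \<le> 1\<close> and a remainder in the
  unit ball gives \<open>M y(g) \<le> 1 + \<parallel>y\<parallel>\<close> for every \<open>M > 0\<close>.
\<close>

section \<open>Continuous functions on compact Hausdorff spaces\<close>

lemma Hausdorff_space_euclidean_t2: "Hausdorff_space (euclidean :: 'a::t2_space topology)"
  unfolding Hausdorff_space_def by (metis disjnt_def hausdorff open_openin)

lemma compact_t2_Urysohn:
  fixes S T :: "'a::t2_space set"
  assumes "compact (UNIV::'a set)" "closed S" "closed T" "S \<inter> T = {}"
  obtains f :: "'a \<Rightarrow> real" where "continuous_on UNIV f" "\<And>x. 0 \<le> f x \<and> f x \<le> 1"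
    "\<And>x. x \<in> S \<Longrightarrow> f x = 0" "\<And>x. x \<in> T \<Longrightarrow> f x = 1"
proof -
  have "compact_space (euclidean :: 'a topology)"
    by (simp add: compact_space_def assms(1))
  then have "normal_space (euclidean :: 'a topology)"
    using compact_Hausdorff_or_regular_imp_normal_space Hausdorff_space_euclidean_t2 by blast
  moreover have "closedin euclidean S" "closedin euclidean T" "disjnt S T"
    using assms by (simp_all add: disjnt_def)
  ultimately obtain f where f: "continuous_map euclidean (top_of_set {0..1::real}) f"
    "f ` S \<subseteq> {0}" "f ` T \<subseteq> {1}"
    by (rule Urysohn_lemma[of _ _ _ 0 1]) simp_all
  have "continuous_on UNIV f" "\<And>x. 0 \<le> f x \<and> f x \<le> 1"
    using f(1) by (auto simp: continuous_map_in_subtopology Pi_iff)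
  moreover have "\<And>x. x \<in> S \<Longrightarrow> f x = 0" "\<And>x. x \<in> T \<Longrightarrow> f x = 1"
    using f(2,3) by auto
  ultimately show ?thesis
    using that by blast
qed

lemma continuous_on_apply_bcontfun_comp [continuous_intros]:
  "continuous_on S g \<Longrightarrow> continuous_on S (\<lambda>x. apply_bcontfun f (g x))"
  by (rule continuous_on_compose2[OF continuous_on_apply_bcontfun]) auto

lemma continuous_on_closed_graph_compact:
  fixes h :: "'a::t2_space \<Rightarrow> 'b::topological_space"
  assumes "compact (UNIV::'a set)" "compact (UNIV::'b set)" and "closed (range (\<lambda>k. (k, h k)))"
  shows "continuous_on UNIV h"
  unfolding continuous_on_closed_vimage[OF closed_UNIV]
proof (intro allI impI)
  fix B :: "'b set"
  assume "closed B"
  let ?G = "range (\<lambda>k. (k, h k)) \<inter> (UNIV \<times> B)"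
  have "closed ?G"
    using assms(3) \<open>closed B\<close> by (intro closed_Int closed_Times) auto
  then have "compact ?G"
    using compact_Int_closed[OF compact_Times[OF assms(1,2)]] by simp
  then have "compact (fst ` ?G)"
    by (intro compact_continuous_image continuous_on_fst continuous_on_id)
  moreover have "h -` B \<inter> UNIV = fst ` ?G"
    by force
  ultimately show "closed (h -` B \<inter> UNIV)"
    by (simp add: compact_imp_closed)
qed

lemma compact_incseq_open_cover:
  fixes W :: "nat \<Rightarrow> 'a::topological_space set"
  assumes "compact K" and "\<And>N. open (W N)" and "incseq W" and "K \<subseteq> (\<Union>N. W N)"
  shows "\<exists>N. K \<subseteq> W N"
proof -
  obtain C where "finite C" "K \<subseteq> (\<Union>N\<in>C. W N)"
    using compactE_image[OF assms(1,2,4)] by metis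
  moreover have "W N \<subseteq> W (Max (insert 0 C))" if "N \<in> C" for N
    using \<open>finite C\<close> that by (intro monoD[OF \<open>incseq W\<close>]) simp
  ultimately show ?thesis
    by blast
qed

lemma apply_Bcontfun_compact:
  fixes f :: "'a::topological_space \<Rightarrow> 'b::metric_space"
  assumes "compact (UNIV::'a set)" "continuous_on UNIV f"
  shows "apply_bcontfun (Bcontfun f) = f"
proof -
  have "bounded (range f)"
    using assms compact_continuous_image compact_imp_bounded by blast
  then show ?thesis
    using assms by (simp add: bcontfun_def Bcontfun_inverse)
qed

lemma bcontfun_Urysohn:
  fixes C :: "'a::t2_space set"
  assumes compact: "compact (UNIV::'a set)" and "closed C" "s \<notin> C"
  obtains g :: "('a, real) bcontfun"
  where "g s = 1" "\<And>x. x \<in> C \<Longrightarrow> g x = 0" "\<And>x. 0 \<le> g x \<and> g x \<le> 1"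
proof -
  have "{s} \<inter> C = {}"
    using \<open>s \<notin> C\<close> by blast
  then obtain f :: "'a \<Rightarrow> real" where f: "continuous_on UNIV f" "\<And>x. 0 \<le> f x \<and> f x \<le> 1"
    "\<And>x. x \<in> {s} \<Longrightarrow> f x = 0" "\<And>x. x \<in> C \<Longrightarrow> f x = 1"
    by (rule compact_t2_Urysohn[OF compact closed_singleton \<open>closed C\<close>]) blast
  have "continuous_on UNIV (\<lambda>x. 1 - f x)"
    using f(1) by (intro continuous_intros)
  then have g: "apply_bcontfun (Bcontfun (\<lambda>x. 1 - f x)) = (\<lambda>x. 1 - f x)"
    by (rule apply_Bcontfun_compact[OF compact])
  show ?thesis
  proof (rule that)
    show "Bcontfun (\<lambda>x. 1 - f x) s = 1"
      using f(3) by (simp add: g)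
    show "Bcontfun (\<lambda>x. 1 - f x) x = 0" if "x \<in> C" for x
      using f(4)[OF that] by (simp add: g)
    show "0 \<le> Bcontfun (\<lambda>x. 1 - f x) x \<and> Bcontfun (\<lambda>x. 1 - f x) x \<le> 1" for x
      using f(2)[of x] by (simp add: g)
  qed
qed

lemma bcontfun_norm_attained:
  fixes f :: "('a::topological_space, 'b::real_normed_vector) bcontfun"
  assumes "compact (UNIV::'a set)"
  obtains x where "norm (f x) = norm f"
proof -
  have "continuous_on UNIV (\<lambda>x. norm (f x))"
    by (intro continuous_on_norm continuous_on_apply_bcontfun)
  then obtain x where "\<forall>y. norm (f y) \<le> norm (f x)"
    using continuous_attains_sup[OF assms, of "\<lambda>x. norm (f x)"] by auto
  then have "norm f \<le> norm (f x)"
    by (intro norm_bound) simp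
  then show ?thesis
    using that norm_bounded[of f x] by force
qed

lemma abs_apply_bcontfun_le_norm: "\<bar>apply_bcontfun (f::('a::topological_space, real) bcontfun) x\<bar> \<le> norm f"
  using norm_bounded[of f x] by simp

lemma norm_const_bcontfun:
  "norm (const_bcontfun c :: ('a::topological_space, 'b::real_normed_vector) bcontfun) = norm c"
proof (rule antisym)
  show "norm (const_bcontfun c :: ('a, 'b) bcontfun) \<le> norm c"
    by (rule norm_bound) simp
  show "norm c \<le> norm (const_bcontfun c :: ('a, 'b) bcontfun)"
    using norm_bounded[of "const_bcontfun c :: ('a, 'b) bcontfun" undefined] by simp
qed

lemma apply_bcontfun_sum:
  fixes f :: "'i \<Rightarrow> ('a::topological_space, 'b::real_normed_vector) bcontfun"
  shows "apply_bcontfun (sum f A) x = (\<Sum>a\<in>A. apply_bcontfun (f a) x)"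
  by (induction A rule: infinite_finite_induct) auto

lemma bcontfun_separates_points:
  fixes a b :: "'a::t2_space"
  assumes "compact (UNIV::'a set)" and "\<And>f::('a, real) bcontfun. f a = f b"
  shows "a = b"
proof (rule ccontr)
  assume "a \<noteq> b"
  then have "a \<notin> {b}"
    by simp
  then obtain g :: "('a, real) bcontfun" where "g a = 1" "\<And>x. x \<in> {b} \<Longrightarrow> g x = 0"
    by (rule bcontfun_Urysohn[OF assms(1) closed_singleton]) blast
  then show False
    using assms(2)[of g] by simp
qed

lemma dirac_apply [simp]: "blinfun_apply (dirac k) f = apply_bcontfun f k"
proof -
  have "bounded_linear (\<lambda>f::('a, real) bcontfun. apply_bcontfun f k)"
    by (rule bounded_linear_intro[where K=1]) (auto simp: abs_apply_bcontfun_le_norm)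
  then show ?thesis
    by (simp add: dirac_def bounded_linear_Blinfun_apply)
qed

lemma norm_dirac: "norm (dirac (k::'a::topological_space)) = 1"
proof (rule antisym)
  show "norm (dirac k) \<le> 1"
    by (rule norm_blinfun_bound) (auto simp: abs_apply_bcontfun_le_norm)
  show "1 \<le> norm (dirac k)"
    using norm_blinfun[of "dirac k" "const_bcontfun 1"] by (simp add: norm_const_bcontfun)
qed

lemma scaleR_dirac_eqD:
  fixes s t :: "'a::t2_space"
  assumes "compact (UNIV::'a set)" and eq: "c *\<^sub>R dirac s = d *\<^sub>R dirac t" and "c \<noteq> 0"
  shows "c = d \<and> s = t"
proof
  have pointwise: "c * f s = d * f t" for f :: "('a, real) bcontfun"
    using arg_cong[OF eq, of "\<lambda>x. blinfun_apply x f"] by (simp add: blinfun.scaleR_left)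
  from pointwise[of "const_bcontfun 1"] show "c = d"
    by simp
  with pointwise \<open>c \<noteq> 0\<close> show "s = t"
    by (intro bcontfun_separates_points[OF assms(1)]) simp
qed

section \<open>Norm-preserving extensions of functionals\<close>

lemma blinfun_le_norm:
  fixes y :: "'a::real_normed_vector \<Rightarrow>\<^sub>L real"
  assumes "norm x \<le> 1"
  shows "blinfun_apply y x \<le> norm y"
proof -
  have "\<bar>blinfun_apply y x\<bar> \<le> norm y * norm x"
    using norm_blinfun[of y x] by simp
  also have "\<dots> \<le> norm y"
    using assms by (simp add: mult_left_le)
  finally show ?thesis
    by simp
qed

lemma blinfun_almost_attains_norm:
  fixes y :: "'a::real_normed_vector \<Rightarrow>\<^sub>L real"
  assumes "\<epsilon> > 0"
  shows "\<exists>x. norm x \<le> 1 \<and> norm y - \<epsilon> < blinfun_apply y x"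
proof (rule ccontr)
  assume "\<not> ?thesis"
  then have below: "blinfun_apply y x \<le> norm y - \<epsilon>" if "norm x \<le> 1" for x
    using that by (meson not_le)
  have "norm y \<le> norm y - \<epsilon>"
  proof (rule norm_blinfun_bound)
    show "0 \<le> norm y - \<epsilon>"
      using below[of 0] by simp
    fix x :: 'a
    show "norm (blinfun_apply y x) \<le> (norm y - \<epsilon>) * norm x"
    proof (cases "x = 0")
      case False
      define u where "u = x /\<^sub>R norm x"
      have "norm u \<le> 1" "norm (- u) \<le> 1"
        using False by (simp_all add: u_def)
      then have "\<bar>blinfun_apply y u\<bar> \<le> norm y - \<epsilon>"
        using below[of u] below[of "- u"] by (simp add: blinfun.minus_right abs_le_iff)
      moreover have "blinfun_apply y x = norm x * blinfun_apply y u"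
        using False by (simp add: u_def blinfun.scaleR_right)
      ultimately show ?thesis
        by (simp add: abs_mult mult.commute mult_left_mono)
    qed simp
  qed
  then show False
    using assms by simp
qed

definition norm_preserving_extension ::
    "('a::real_normed_vector \<Rightarrow> 'b::real_normed_vector) \<Rightarrow> ('a \<Rightarrow>\<^sub>L real) \<Rightarrow> ('b \<Rightarrow>\<^sub>L real) \<Rightarrow> bool"
  where "norm_preserving_extension T x' y' \<longleftrightarrow>
    (\<lambda>x. blinfun_apply y' (T x)) = blinfun_apply x' \<and> norm y' = norm x'"

lemma U_embedding_iff:
  "U_embedding T \<longleftrightarrow> linear_isometry T \<and> (\<forall>x'. \<exists>!y'. norm_preserving_extension T x' y')"
  by (simp add: U_embedding_def norm_preserving_extension_def)

definition U_representation ::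
    "(('a::topological_space, real) bcontfun \<Rightarrow> ('b::topological_space, real) bcontfun)
      \<Rightarrow> 'b set \<Rightarrow> ('a \<Rightarrow> 'b) \<Rightarrow> ('a \<Rightarrow> real) \<Rightarrow> bool"
  where "U_representation T S0 h \<epsilon> \<longleftrightarrow>
    closed S0 \<and> (\<exists>g. homeomorphism UNIV S0 h g) \<and>
    continuous_on UNIV \<epsilon> \<and> (\<forall>k. \<epsilon> k \<in> {-1, 1}) \<and>
    (\<forall>k. FT T (h k) = \<epsilon> k *\<^sub>R dirac k) \<and>
    (\<forall>s \<in> UNIV - S0. norm (FT T s) < 1)"

section \<open>Isometric embeddings and weighted composition operators\<close>

locale isometric_embedding =
  fixes T :: "('a::topological_space, real) bcontfun \<Rightarrow> ('b::topological_space, real) bcontfun"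
  assumes isometry: "linear_isometry T"
begin

lemma linear_T: "linear T"
  using isometry by (simp add: linear_isometry_def)

lemma norm_T [simp]: "norm (T f) = norm f"
  using isometry by (simp add: linear_isometry_def)

lemma abs_T_apply_le: "\<bar>T f s\<bar> \<le> norm f"
  using abs_apply_bcontfun_le_norm[of "T f" s] by simp

lemma FT_apply [simp]: "blinfun_apply (FT T s) f = T f s"
proof -
  have "bounded_linear (\<lambda>f. T f s)"
  proof (rule bounded_linear_intro[where K=1])
    show "T (f + g) s = T f s + T g s" "T (r *\<^sub>R f) s = r *\<^sub>R T f s" for f g r
      by (simp_all add: linear_add[OF linear_T] linear_scale[OF linear_T])
  qed (simp add: abs_T_apply_le)
  then show ?thesis
    by (simp add: FT_def bounded_linear_Blinfun_apply)
qed

lemma norm_FT_le_one: "norm (FT T s) \<le> 1"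
  by (rule norm_blinfun_bound) (simp_all add: abs_T_apply_le)

lemma FT_eq_scaleR_dirac_iff: "FT T s = c *\<^sub>R dirac k \<longleftrightarrow> (\<forall>f. T f s = c * f k)"
proof
  show "\<forall>f. T f s = c * f k" if "FT T s = c *\<^sub>R dirac k"
  proof
    fix f
    have "blinfun_apply (FT T s) f = blinfun_apply (c *\<^sub>R dirac k) f"
      using that by simp
    then show "T f s = c * f k"
      by (simp add: blinfun.scaleR_left)
  qed
qed (intro blinfun_eqI, simp add: blinfun.scaleR_left)

lemma norm_preserving_extension_scaleR_dirac:
  assumes "\<bar>c\<bar> = 1" and "\<And>f. T f s = c * f k"
  shows "norm_preserving_extension T (dirac k) (c *\<^sub>R dirac s)"
proof -
  have "c * c = 1"
    using assms(1) abs_mult_self_eq[of c] by simp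
  then show ?thesis
    using assms by (auto simp: norm_preserving_extension_def blinfun.scaleR_left norm_dirac)
qed

end

(* Bcontfun only gives the intended function when h and e are continuous and the domain is
   compact; every lemma about weighted_comp assumes this. *)
definition weighted_comp ::
    "('a::topological_space \<Rightarrow> 'b::topological_space) \<Rightarrow> ('a \<Rightarrow> real) \<Rightarrow> ('b, real) bcontfun \<Rightarrow> ('a, real) bcontfun"
  where "weighted_comp h e g = Bcontfun (\<lambda>k. e k * g (h k))"

definition weighted_comp_adjoint ::
    "('a::topological_space \<Rightarrow> 'b::topological_space) \<Rightarrow> ('a \<Rightarrow> real)
      \<Rightarrow> (('a, real) bcontfun \<Rightarrow>\<^sub>L real) \<Rightarrow> (('b, real) bcontfun \<Rightarrow>\<^sub>L real)"
  where "weighted_comp_adjoint h e x' = Blinfun (\<lambda>g. blinfun_apply x' (weighted_comp h e g))"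

context
  fixes h :: "'a::topological_space \<Rightarrow> 'b::topological_space" and e :: "'a \<Rightarrow> real"
  assumes compact: "compact (UNIV::'a set)"
    and cont_h: "continuous_on UNIV h" and cont_e: "continuous_on UNIV e"
    and abs_e: "\<And>k. \<bar>e k\<bar> = 1"
begin

lemma weighted_comp_apply [simp]: "weighted_comp h e g k = e k * g (h k)"
proof -
  have "continuous_on UNIV (\<lambda>k. e k * g (h k))"
    by (intro continuous_intros cont_e cont_h)
  then show ?thesis
    by (simp add: weighted_comp_def apply_Bcontfun_compact[OF compact])
qed

lemma norm_weighted_comp_le: "norm (weighted_comp h e g) \<le> norm g"
  by (rule norm_bound) (simp add: abs_mult abs_e abs_apply_bcontfun_le_norm)

lemma bounded_linear_weighted_comp: "bounded_linear (weighted_comp h e)"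
proof (rule bounded_linear_intro[where K=1])
  show "weighted_comp h e (f + g) = weighted_comp h e f + weighted_comp h e g"
    "weighted_comp h e (r *\<^sub>R f) = r *\<^sub>R weighted_comp h e f" for f g r
    by (simp_all add: bcontfun_eqI algebra_simps)
qed (simp add: norm_weighted_comp_le)

lemma weighted_comp_adjoint_apply [simp]:
  "blinfun_apply (weighted_comp_adjoint h e x') g = blinfun_apply x' (weighted_comp h e g)"
proof -
  have "bounded_linear (\<lambda>g. blinfun_apply x' (weighted_comp h e g))"
    by (rule bounded_linear_compose[OF blinfun.bounded_linear_right bounded_linear_weighted_comp])
  then show ?thesis
    by (simp add: weighted_comp_adjoint_def bounded_linear_Blinfun_apply)
qed

context
  fixes T :: "('a, real) bcontfun \<Rightarrow> ('b, real) bcontfun"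
  assumes T_at_h: "\<And>f k. T f (h k) = e k * f k"
begin

lemma weighted_comp_left_inverse: "weighted_comp h e (T f) = f"
proof (rule bcontfun_eqI)
  fix k
  have "e k * e k = 1"
    using abs_e[of k] abs_mult_self_eq[of "e k"] by simp
  then show "weighted_comp h e (T f) k = f k"
    by (simp add: T_at_h mult.assoc[symmetric])
qed

lemma norm_preserving_extension_weighted_comp_adjoint:
  assumes "linear_isometry T"
  shows "norm_preserving_extension T x' (weighted_comp_adjoint h e x')"
proof -
  have "norm (weighted_comp_adjoint h e x') \<le> norm x'"
  proof (rule norm_blinfun_bound)
    fix g
    have "norm (blinfun_apply x' (weighted_comp h e g)) \<le> norm x' * norm (weighted_comp h e g)"
      by (rule norm_blinfun)
    also have "\<dots> \<le> norm x' * norm g"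
      by (intro mult_left_mono norm_weighted_comp_le) simp
    finally show "norm (blinfun_apply (weighted_comp_adjoint h e x') g) \<le> norm x' * norm g"
      by simp
  qed simp
  moreover have "norm x' \<le> norm (weighted_comp_adjoint h e x')"
  proof (rule norm_blinfun_bound)
    fix f
    have "norm (blinfun_apply x' f) = norm (blinfun_apply (weighted_comp_adjoint h e x') (T f))"
      by (simp add: weighted_comp_left_inverse)
    also have "\<dots> \<le> norm (weighted_comp_adjoint h e x') * norm (T f)"
      by (rule norm_blinfun)
    finally show "norm (blinfun_apply x' f) \<le> norm (weighted_comp_adjoint h e x') * norm f"
      using assms by (simp add: linear_isometry_def)
  qed simp
  ultimately show ?thesis
    by (simp add: norm_preserving_extension_def weighted_comp_left_inverse)
qed

end

end

section \<open>Holsztynski's theorem\<close>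

definition peaking_at :: "'a::topological_space \<Rightarrow> ('a, real) bcontfun set"
  where "peaking_at k = {p. norm p \<le> 1 \<and> apply_bcontfun p k = 1}"

lemma const_one_peaking_at: "const_bcontfun 1 \<in> peaking_at k"
  by (simp add: peaking_at_def norm_const_bcontfun)

lemma norm_peaking_at: "p \<in> peaking_at k \<Longrightarrow> norm p = 1"
  using abs_apply_bcontfun_le_norm[of p k] by (simp add: peaking_at_def)

lemma mean_peaking_at:
  assumes G: "finite G" "G \<subseteq> peaking_at k" "G \<noteq> {}"
  shows "(1 / real (card G)) *\<^sub>R sum id G \<in> peaking_at k"
proof -
  define q where "q = (1 / real (card G)) *\<^sub>R sum id G"
  have n: "real (card G) > 0"
    using G by (simp add: card_gt_0_iff)
  have q_apply: "q x = (\<Sum>p\<in>G. apply_bcontfun p x) / real (card G)" for x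
    by (simp add: q_def apply_bcontfun_sum)
  have "norm q \<le> 1"
  proof (rule norm_bound)
    fix x
    have "\<bar>\<Sum>p\<in>G. apply_bcontfun p x\<bar> \<le> (\<Sum>p\<in>G. 1)"
      using G(2) by (intro order.trans[OF sum_abs] sum_mono)
        (auto simp: peaking_at_def intro: order.trans[OF abs_apply_bcontfun_le_norm])
    then show "norm (q x) \<le> 1"
      using n by (simp add: q_apply)
  qed
  moreover have "q k = 1"
    using G n by (simp add: q_apply peaking_at_def subset_iff)
  ultimately show ?thesis
    by (simp add: peaking_at_def q_def)
qed

locale compact_isometric_embedding = isometric_embedding T
  for T :: "('a::t2_space, real) bcontfun \<Rightarrow> ('b::t2_space, real) bcontfun" +
  assumes compact_dom: "compact (UNIV::'a set)" and compact_codom: "compact (UNIV::'b set)"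
begin

lemma finite_peaking_common_value:
  assumes G: "finite G" "G \<subseteq> peaking_at k" "G \<noteq> {}"
  shows "\<exists>\<sigma> s. \<bar>\<sigma>\<bar> = 1 \<and> (\<forall>p\<in>G. T p s = \<sigma>)"
proof -
  define n where "n = real (card G)"
  define q where "q = (1 / n) *\<^sub>R sum id G"
  have "q \<in> peaking_at k"
    unfolding q_def n_def using G by (rule mean_peaking_at)
  then obtain s where s: "\<bar>T q s\<bar> = 1"
    using bcontfun_norm_attained[OF compact_codom, of "T q"] by (auto simp: norm_peaking_at)
  define \<sigma> where "\<sigma> = T q s"
  have \<sigma>\<sigma>: "\<sigma> * \<sigma> = 1"
    using s abs_mult_self_eq[of \<sigma>] by (simp add: \<sigma>_def)
  have below: "\<sigma> * T p s \<le> 1" if "p \<in> G" for p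
  proof -
    have "\<bar>T p s\<bar> \<le> 1"
      using abs_T_apply_le[of p s] G(2) that by (auto simp: peaking_at_def)
    then have "\<bar>\<sigma> * T p s\<bar> \<le> 1"
      using s by (simp add: \<sigma>_def abs_mult)
    then show ?thesis
      by (simp add: abs_le_iff)
  qed
  have "(\<Sum>p\<in>G. \<sigma> * T p s) = \<sigma> * (n * \<sigma>)"
    using G by (simp add: \<sigma>_def q_def n_def card_gt_0_iff linear_scale[OF linear_T]
        linear_sum[OF linear_T] apply_bcontfun_sum sum_distrib_left)
  also have "\<dots> = n"
    by (metis \<sigma>\<sigma> mult.left_commute mult_1_right)
  finally have "(\<Sum>p\<in>G. 1 - \<sigma> * T p s) = 0"
    by (simp add: sum_subtractf n_def)
  then have "\<sigma> * T p s = 1" if "p \<in> G" for p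
    using sum_nonneg_eq_0_iff[OF G(1), of "\<lambda>p. 1 - \<sigma> * T p s"] below that by fastforce
  then have "T p s = \<sigma>" if "p \<in> G" for p
    by (metis that \<sigma>\<sigma> mult.assoc mult_1_left mult_1_right)
  then have "\<bar>\<sigma>\<bar> = 1 \<and> (\<forall>p\<in>G. T p s = \<sigma>)"
    using s by (simp add: \<sigma>_def)
  then show ?thesis
    by blast
qed

lemma peaking_common_value:
  shows "\<exists>\<sigma> s. \<bar>\<sigma>\<bar> = 1 \<and> (\<forall>p\<in>peaking_at k. T p s = \<sigma>)"
proof -
  define one where "one = (const_bcontfun 1 :: ('a, real) bcontfun)"
  define D where "D p = {s. T p s = T one s \<and> \<bar>T one s\<bar> = 1}" for p
  have "closed (D p)" for p
    unfolding D_def by (intro closed_Collect_conj closed_Collect_eq continuous_intros)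
  moreover have "UNIV \<inter> (\<Inter>p\<in>F. D p) \<noteq> {}" if "finite F" "F \<subseteq> peaking_at k" for F
  proof -
    have "finite (insert one F)" "insert one F \<subseteq> peaking_at k" "insert one F \<noteq> {}"
      using that const_one_peaking_at by (auto simp: one_def)
    then obtain \<sigma> s where "\<bar>\<sigma>\<bar> = 1" "\<And>p. p \<in> insert one F \<Longrightarrow> T p s = \<sigma>"
      using finite_peaking_common_value by meson
    then have "s \<in> D p" if "p \<in> F" for p
      using that by (simp add: D_def)
    then show ?thesis
      by blast
  qed
  ultimately have "UNIV \<inter> (\<Inter>p\<in>peaking_at k. D p) \<noteq> {}"
    by (rule compact_imp_fip_image[OF compact_codom])
  then obtain s where s: "\<And>p. p \<in> peaking_at k \<Longrightarrow> s \<in> D p"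
    by blast
  have "\<bar>T one s\<bar> = 1"
    using s[OF const_one_peaking_at] by (simp add: D_def one_def)
  moreover have "\<forall>p\<in>peaking_at k. T p s = T one s"
    using s by (simp add: D_def)
  ultimately show ?thesis
    by blast
qed

lemma vanishes_near_peak:
  fixes f :: "('a, real) bcontfun"
  assumes peak: "\<And>p. p \<in> peaking_at k \<Longrightarrow> T p s = \<sigma>"
    and V: "open V" "k \<in> V" "\<And>x. x \<in> V \<Longrightarrow> f x = 0"
  shows "T f s = 0"
proof (cases "f = 0")
  case True
  then show ?thesis
    by (simp add: linear_0[OF linear_T])
next
  case False
  have "closed (- V)" "k \<notin> - V"
    using V(1,2) by (simp_all add: closed_Compl)
  then obtain p :: "('a, real) bcontfun"
    where p: "p k = 1" "\<And>x. x \<in> - V \<Longrightarrow> p x = 0" "\<And>x. 0 \<le> p x \<and> p x \<le> 1"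
    by (rule bcontfun_Urysohn[OF compact_dom]) blast
  define f' where "f' = f /\<^sub>R norm f"
  have f'_apply: "f' x = f x / norm f" for x
    by (simp add: f'_def divide_inverse_commute)
  have f'_le: "\<bar>f' x\<bar> \<le> 1" for x
    using abs_apply_bcontfun_le_norm[of f x] False by (simp add: f'_apply abs_divide divide_le_eq_1)
  have "p \<in> peaking_at k"
    using p(1,3) by (auto simp: peaking_at_def intro!: norm_bound)
  moreover have "p + f' \<in> peaking_at k"
  proof -
    have pf'_le: "\<bar>p x + f' x\<bar> \<le> 1" for x
      using p(2,3)[of x] V(3)[of x] f'_le[of x] by (cases "x \<in> V") (auto simp: f'_apply)
    have "norm (p + f') \<le> 1"
      by (rule norm_bound) (simp add: pf'_le)
    then show ?thesis
      using V(2,3) by (simp add: peaking_at_def f'_apply p(1))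
  qed
  ultimately have "T (p + f') s = T p s"
    using peak by simp
  then have "T f' s = 0"
    by (simp add: linear_add[OF linear_T])
  then show ?thesis
    using False by (simp add: f'_def linear_scale[OF linear_T])
qed

lemma vanishes_at_peak:
  fixes f :: "('a, real) bcontfun"
  assumes peak: "\<And>p. p \<in> peaking_at k \<Longrightarrow> T p s = \<sigma>" and "f k = 0"
  shows "T f s = 0"
proof (rule ccontr)
  assume "T f s \<noteq> 0"
  define \<eta> where "\<eta> = \<bar>T f s\<bar> / 2"
  have "\<eta> > 0"
    using \<open>T f s \<noteq> 0\<close> by (simp add: \<eta>_def)
  define g where "g = Bcontfun (\<lambda>x. f x - max (- \<eta>) (min (f x) \<eta>))"
  have "continuous_on UNIV (\<lambda>x. f x - max (- \<eta>) (min (f x) \<eta>))"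
    by (intro continuous_intros)
  then have g_apply: "g x = f x - max (- \<eta>) (min (f x) \<eta>)" for x
    by (simp add: g_def apply_Bcontfun_compact[OF compact_dom])
  have "T g s = 0"
  proof (rule vanishes_near_peak[OF peak])
    show "open {x. \<bar>f x\<bar> < \<eta>}"
      by (intro open_Collect_less continuous_intros)
  qed (use \<open>f k = 0\<close> \<open>\<eta> > 0\<close> in \<open>auto simp: g_apply\<close>)
  moreover have "norm (f - g) \<le> \<eta>"
    by (rule norm_bound) (use \<open>\<eta> > 0\<close> in \<open>auto simp: g_apply\<close>)
  then have "\<bar>T (f - g) s\<bar> \<le> \<eta>"
    using abs_T_apply_le[of "f - g" s] by simp
  ultimately have "\<bar>T f s\<bar> \<le> \<eta>"
    by (simp add: linear_diff[OF linear_T])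
  then show False
    using \<open>\<eta> > 0\<close> by (simp add: \<eta>_def)
qed

theorem Holsztynski: "\<exists>\<sigma> s. \<bar>\<sigma>\<bar> = 1 \<and> (\<forall>f. T f s = \<sigma> * f k)"
proof -
  obtain \<sigma> s where \<sigma>: "\<bar>\<sigma>\<bar> = 1" and peak: "\<And>p. p \<in> peaking_at k \<Longrightarrow> T p s = \<sigma>"
    using peaking_common_value[of k] by blast
  define one where "one = (const_bcontfun 1 :: ('a, real) bcontfun)"
  have T_one: "T one s = \<sigma>"
    unfolding one_def by (rule peak[OF const_one_peaking_at])
  have "T f s = \<sigma> * f k" for f
  proof -
    have "(f - f k *\<^sub>R one) k = 0"
      by (simp add: one_def)
    with peak have "T (f - f k *\<^sub>R one) s = 0"
      by (rule vanishes_at_peak)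
    moreover have "T (f - f k *\<^sub>R one) s = T f s - f k * T one s"
      by (simp add: linear_diff[OF linear_T] linear_scale[OF linear_T])
    ultimately show ?thesis
      by (simp add: T_one)
  qed
  with \<sigma> show ?thesis
    by blast
qed

section \<open>Necessity\<close>

lemma exists_peak_map: "\<exists>e h. \<forall>k. \<bar>e k\<bar> = 1 \<and> (\<forall>f. T f (h k) = e k * f k)"
  using Holsztynski by metis

lemma peak_point_unique:
  assumes U: "U_embedding T"
    and "\<bar>\<sigma>\<bar> = 1" "\<And>f. T f s = \<sigma> * f k" and "\<bar>\<tau>\<bar> = 1" "\<And>f. T f t = \<tau> * f k"
  shows "\<sigma> = \<tau> \<and> s = t"
proof -
  have "norm_preserving_extension T (dirac k) (\<sigma> *\<^sub>R dirac s)"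
    "norm_preserving_extension T (dirac k) (\<tau> *\<^sub>R dirac t)"
    using assms(2-5) by (simp_all add: norm_preserving_extension_scaleR_dirac)
  then have "\<sigma> *\<^sub>R dirac s = \<tau> *\<^sub>R dirac t"
    using U unfolding U_embedding_iff by blast
  then show ?thesis
    using scaleR_dirac_eqD[OF compact_codom] \<open>\<bar>\<sigma>\<bar> = 1\<close> by fastforce
qed

lemma inj_peak_map:
  assumes abs_e: "\<And>k. \<bar>e k\<bar> = 1" and T_at_h: "\<And>f k. T f (h k) = e k * f k"
  shows "inj h"
proof (rule injI)
  fix k1 k2
  assume eq: "h k1 = h k2"
  have "e k1 = e k2"
    using T_at_h[of "const_bcontfun 1" k1] T_at_h[of "const_bcontfun 1" k2] eq by simp
  then have "f k1 = f k2" for f :: "('a, real) bcontfun"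
    using T_at_h[of f k1] T_at_h[of f k2] eq abs_e[of k1] by auto
  then show "k1 = k2"
    by (rule bcontfun_separates_points[OF compact_dom])
qed

lemma continuous_peak_map:
  assumes U: "U_embedding T" and abs_e: "\<And>k. \<bar>e k\<bar> = 1" and T_at_h: "\<And>f k. T f (h k) = e k * f k"
  shows "continuous_on UNIV h"
proof (rule continuous_on_closed_graph_compact[OF compact_dom compact_codom])
  define Z where "Z \<sigma> = {p. \<forall>f. T f (snd p) = \<sigma> * f (fst p)}" for \<sigma>
  have "closed (Z \<sigma>)" for \<sigma>
  proof -
    have "Z \<sigma> = (\<Inter>f. {p. T f (snd p) = \<sigma> * f (fst p)})"
      by (auto simp: Z_def)
    moreover have "closed {p. T f (snd p) = \<sigma> * f (fst p)}" for f
      by (intro closed_Collect_eq continuous_intros continuous_on_fst continuous_on_snd)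
    ultimately show ?thesis
      by auto
  qed
  moreover have "range (\<lambda>k. (k, h k)) = Z 1 \<union> Z (-1)"
  proof (intro set_eqI iffI)
    fix p :: "'a \<times> 'b"
    assume "p \<in> range (\<lambda>k. (k, h k))"
    then obtain k where p: "p = (k, h k)"
      by blast
    have "e k = 1 \<or> e k = -1"
      using abs_e[of k] by (auto simp: abs_if split: if_splits)
    then show "p \<in> Z 1 \<union> Z (-1)"
      using T_at_h p by (auto simp: Z_def)
  next
    fix p :: "'a \<times> 'b"
    assume "p \<in> Z 1 \<union> Z (-1)"
    then obtain \<sigma> where "\<sigma> \<in> {1, -1}" "\<And>f. T f (snd p) = \<sigma> * f (fst p)"
      unfolding Z_def by blast
    moreover from this(1) have "\<bar>\<sigma>\<bar> = 1"
      by auto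
    ultimately have "snd p = h (fst p)"
      using peak_point_unique[OF U _ _ abs_e T_at_h] by blast
    then show "p \<in> range (\<lambda>k. (k, h k))"
      by (metis prod.collapse rangeI)
  qed
  ultimately show "closed (range (\<lambda>k. (k, h k)))"
    by (simp add: closed_Un)
qed

lemma norm_FT_less_one_off_peak_range:
  assumes U: "U_embedding T" and cont_h: "continuous_on UNIV h" and cont_e: "continuous_on UNIV e"
    and abs_e: "\<And>k. \<bar>e k\<bar> = 1" and T_at_h: "\<And>f k. T f (h k) = e k * f k" and s: "s \<notin> range h"
  shows "norm (FT T s) < 1"
proof (rule ccontr)
  assume "\<not> norm (FT T s) < 1"
  then have "norm (FT T s) = 1"
    using norm_FT_le_one[of s] by simp
  then have "norm_preserving_extension T (FT T s) (dirac s)"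
    by (simp add: norm_preserving_extension_def norm_dirac fun_eq_iff)
  moreover have "norm_preserving_extension T (FT T s) (weighted_comp_adjoint h e (FT T s))"
    using compact_dom cont_h cont_e abs_e T_at_h isometry by (rule norm_preserving_extension_weighted_comp_adjoint)
  ultimately have eq: "dirac s = weighted_comp_adjoint h e (FT T s)"
    using U unfolding U_embedding_iff by blast
  have "closed (range h)"
    by (intro compact_imp_closed compact_continuous_image cont_h compact_dom)
  then obtain g :: "('b, real) bcontfun" where g: "g s = 1" "\<And>x. x \<in> range h \<Longrightarrow> g x = 0"
    by (rule bcontfun_Urysohn[OF compact_codom _ s]) blast
  have "weighted_comp h e g = 0"
    by (rule bcontfun_eqI) (simp add: weighted_comp_apply[OF compact_dom cont_h cont_e abs_e] g(2)[OF rangeI])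
  then have "blinfun_apply (weighted_comp_adjoint h e (FT T s)) g = 0"
    by (simp add: weighted_comp_adjoint_apply[OF compact_dom cont_h cont_e abs_e])
  moreover have "blinfun_apply (dirac s) g = 1"
    by (simp add: g(1))
  ultimately show False
    using eq by simp
qed

theorem U_embedding_imp_U_representation:
  assumes U: "U_embedding T"
  shows "\<exists>S0 h \<epsilon>. U_representation T S0 h \<epsilon>"
proof -
  obtain e h where abs_e: "\<And>k. \<bar>e k\<bar> = 1" and T_at_h: "\<And>f k. T f (h k) = e k * f k"
    using exists_peak_map by blast
  have cont_h: "continuous_on UNIV h"
    using U abs_e T_at_h by (rule continuous_peak_map)
  have cont_e: "continuous_on UNIV e"
  proof -
    have "continuous_on UNIV (\<lambda>k. T (const_bcontfun 1) (h k))"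
      by (intro continuous_intros cont_h)
    then show ?thesis
      using T_at_h[of "const_bcontfun 1"] by simp
  qed
  have "\<exists>g. homeomorphism UNIV (range h) h g"
    using homeomorphism_compact[OF compact_dom cont_h refl] inj_peak_map[OF abs_e T_at_h] by simp
  moreover have "closed (range h)"
    by (intro compact_imp_closed compact_continuous_image cont_h compact_dom)
  moreover have "e k \<in> {-1, 1}" for k
    using abs_e[of k] by (auto simp: abs_if split: if_splits)
  moreover have "FT T (h k) = e k *\<^sub>R dirac k" for k
    using T_at_h by (simp add: FT_eq_scaleR_dirac_iff)
  moreover have "norm (FT T s) < 1" if "s \<notin> range h" for s
    using U cont_h cont_e abs_e T_at_h that by (rule norm_FT_less_one_off_peak_range)
  ultimately show ?thesis
    unfolding U_representation_def using cont_e by blast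
qed

end

section \<open>Sufficiency\<close>

lemma bcontfun_clamp:
  fixes v :: "('b::topological_space, real) bcontfun"
  assumes compact: "compact (UNIV::'b set)" and cont_w: "continuous_on UNIV w"
    and w_nonneg: "\<And>s. 0 \<le> w s"
  shows "\<exists>c :: ('b, real) bcontfun. \<forall>s. \<bar>c s\<bar> \<le> w s \<and> \<bar>v s - c s\<bar> \<le> max 0 (\<bar>v s\<bar> - w s)"
proof -
  define c where "c = Bcontfun (\<lambda>s. max (- w s) (min (v s) (w s)))"
  have "continuous_on UNIV (\<lambda>s. max (- w s) (min (v s) (w s)))"
    by (intro continuous_intros cont_w)
  then have "c s = max (- w s) (min (v s) (w s))" for s
    by (simp add: c_def apply_Bcontfun_compact[OF compact])
  then have "\<bar>c s\<bar> \<le> w s \<and> \<bar>v s - c s\<bar> \<le> max 0 (\<bar>v s\<bar> - w s)" for s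
    using w_nonneg[of s] by (simp add: abs_le_iff max_def min_def)
  then show ?thesis
    by blast
qed

lemma bcontfun_split_below_sum:
  fixes w :: "nat \<Rightarrow> 'b::topological_space \<Rightarrow> real" and v :: "('b, real) bcontfun"
  assumes compact: "compact (UNIV::'b set)" and cont_w: "\<And>n. continuous_on UNIV (w n)"
    and w_nonneg: "\<And>n s. 0 \<le> w n s" and "0 \<le> r"
    and v_le: "\<And>s. \<bar>v s\<bar> \<le> (\<Sum>n<N. w n s) + r"
  shows "\<exists>vs :: nat \<Rightarrow> ('b, real) bcontfun.
    (\<forall>n<N. \<forall>s. \<bar>vs n s\<bar> \<le> w n s) \<and> (\<forall>s. \<bar>v s - (\<Sum>n<N. vs n s)\<bar> \<le> r)"
  using v_le
proof (induction N arbitrary: v)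
  case 0
  then show ?case
    by auto
next
  case (Suc N)
  obtain c :: "('b, real) bcontfun"
    where c: "\<And>s. \<bar>c s\<bar> \<le> w N s" "\<And>s. \<bar>v s - c s\<bar> \<le> max 0 (\<bar>v s\<bar> - w N s)"
    using bcontfun_clamp[OF compact cont_w[of N] w_nonneg[of N], where v=v] by blast
  have "\<bar>(v - c) s\<bar> \<le> (\<Sum>n<N. w n s) + r" for s
  proof -
    have "0 \<le> (\<Sum>n<N. w n s)"
      by (intro sum_nonneg w_nonneg)
    then show ?thesis
      using c(2)[of s] Suc.prems[of s] \<open>0 \<le> r\<close> by simp
  qed
  then have "\<exists>vs :: nat \<Rightarrow> ('b, real) bcontfun.
      (\<forall>n<N. \<forall>s. \<bar>vs n s\<bar> \<le> w n s) \<and> (\<forall>s. \<bar>(v - c) s - (\<Sum>n<N. vs n s)\<bar> \<le> r)"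
    by (rule Suc.IH)
  then obtain vs :: "nat \<Rightarrow> ('b, real) bcontfun"
    where vs: "\<forall>n<N. \<forall>s. \<bar>vs n s\<bar> \<le> w n s" "\<forall>s. \<bar>(v - c) s - (\<Sum>n<N. vs n s)\<bar> \<le> r"
    by blast
  have sum_upd: "(\<Sum>n<N. (vs(N := c)) n s) = (\<Sum>n<N. vs n s)" for s
    by (rule sum.cong) auto
  have "\<bar>(vs(N := c)) n s\<bar> \<le> w n s" if "n < Suc N" for n s
    using vs(1) c(1) that by (cases "n = N") auto
  moreover have "\<bar>v s - (\<Sum>n<Suc N. (vs(N := c)) n s)\<bar> \<le> r" for s
    using vs(2)[rule_format, of s] by (simp add: sum_upd algebra_simps)
  ultimately show ?case
    by blast
qed

lemma compact_sum_eventually_exceeds: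
  fixes w :: "nat \<Rightarrow> 'b::topological_space \<Rightarrow> real" and v :: "'b \<Rightarrow> real"
  assumes compact: "compact (UNIV::'b set)" and cont_w: "\<And>n. continuous_on UNIV (w n)"
    and w_nonneg: "\<And>n s. 0 \<le> w n s" and cont_v: "continuous_on UNIV v"
    and gap: "\<And>s. 0 \<le> v s \<Longrightarrow> \<exists>c>0. \<forall>n. c \<le> w n s"
  shows "\<exists>N. \<forall>s. v s < (\<Sum>n<N. w n s)"
proof -
  define W where "W N = {s. v s < (\<Sum>n<N. w n s)}" for N
  have "open (W N)" for N
    unfolding W_def by (intro open_Collect_less continuous_intros cont_v cont_w)
  moreover have "incseq W"
  proof (rule incseq_SucI)
    show "W N \<subseteq> W (Suc N)" for N
      using w_nonneg by (auto simp: W_def intro: less_le_trans)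
  qed
  moreover have "UNIV \<subseteq> (\<Union>N. W N)"
  proof
    fix s :: 'b
    show "s \<in> (\<Union>N. W N)"
    proof (cases "v s < 0")
      case True
      then have "s \<in> W 0"
        by (simp add: W_def)
      then show ?thesis
        by blast
    next
      case False
      then obtain c where c: "c > 0" "\<And>n. c \<le> w n s"
        using gap[of s] by auto
      obtain N :: nat where "v s / c < N"
        using reals_Archimedean2 by blast
      then have "v s < N * c"
        using c(1) by (simp add: divide_less_eq)
      also have "\<dots> = (\<Sum>n<N. c)"
        by simp
      also have "\<dots> \<le> (\<Sum>n<N. w n s)"
        by (intro sum_mono c(2))
      finally have "s \<in> W N"
        by (simp add: W_def)
      then show ?thesis
        by blast
    qed
  qed
  ultimately have "\<exists>N. UNIV \<subseteq> W N"
    by (rule compact_incseq_open_cover[OF compact])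
  then show ?thesis
    by (auto simp: W_def)
qed

lemma blinfun_le_sum_gaps:
  fixes y :: "('b::topological_space, real) bcontfun \<Rightarrow>\<^sub>L real"
    and u :: "nat \<Rightarrow> ('b, real) bcontfun" and v :: "('b, real) bcontfun"
  assumes compact: "compact (UNIV::'b set)" and u_norm: "\<And>n. norm (u n) \<le> 1"
    and v_le: "\<And>s. \<bar>v s\<bar> \<le> (\<Sum>n<N. 1 - \<bar>u n s\<bar>) + 1"
  shows "blinfun_apply y v \<le> (\<Sum>n<N. norm y - blinfun_apply y (u n)) + norm y"
proof -
  have cont: "continuous_on UNIV (\<lambda>s. 1 - \<bar>u n s\<bar>)" for n
    by (intro continuous_intros)
  have nonneg: "0 \<le> 1 - \<bar>u n s\<bar>" for n s
    using abs_apply_bcontfun_le_norm[of "u n" s] u_norm[of n] by linarith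
  obtain vs :: "nat \<Rightarrow> ('b, real) bcontfun"
    where vs: "\<And>n s. n < N \<Longrightarrow> \<bar>vs n s\<bar> \<le> 1 - \<bar>u n s\<bar>"
    and rest: "\<And>s. \<bar>v s - (\<Sum>n<N. vs n s)\<bar> \<le> 1"
    using bcontfun_split_below_sum[where w="\<lambda>n s. 1 - \<bar>u n s\<bar>", OF compact cont nonneg zero_le_one v_le]
    by blast
  have vs_le: "blinfun_apply y (vs n) \<le> norm y - blinfun_apply y (u n)" if "n < N" for n
  proof -
    have "norm (u n + vs n) \<le> 1"
    proof (rule norm_bound)
      fix s
      show "norm ((u n + vs n) s) \<le> 1"
        using vs[OF that, of s] abs_triangle_ineq[of "u n s" "vs n s"] by simp
    qed
    then have "blinfun_apply y (u n + vs n) \<le> norm y"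
      by (rule blinfun_le_norm)
    then show ?thesis
      by (simp add: blinfun.add_right)
  qed
  have rest_le: "blinfun_apply y (v - sum vs {..<N}) \<le> norm y"
    by (rule blinfun_le_norm, rule norm_bound) (use rest in \<open>simp add: apply_bcontfun_sum\<close>)
  have "blinfun_apply y v = (\<Sum>n<N. blinfun_apply y (vs n)) + blinfun_apply y (v - sum vs {..<N})"
    by (simp add: blinfun.diff_right blinfun.sum_right)
  also have "\<dots> \<le> (\<Sum>n<N. norm y - blinfun_apply y (u n)) + norm y"
    using vs_le rest_le by (intro add_mono sum_mono) auto
  finally show ?thesis .
qed

lemma norming_sequence_scaled_le:
  fixes y :: "('b::topological_space, real) bcontfun \<Rightarrow>\<^sub>L real"
    and u :: "nat \<Rightarrow> ('b, real) bcontfun" and g :: "('b, real) bcontfun"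
  assumes compact: "compact (UNIV::'b set)" and u_norm: "\<And>n. norm (u n) \<le> 1"
    and u_norming: "\<And>n. norm y - (1/2)^Suc n < blinfun_apply y (u n)"
    and gap: "\<And>s. g s \<noteq> 0 \<Longrightarrow> \<exists>c>0. \<forall>n. c \<le> 1 - \<bar>u n s\<bar>"
    and "M > 0"
  shows "M * blinfun_apply y g \<le> 1 + norm y"
proof -
  have "\<exists>N. \<forall>s. M * \<bar>g s\<bar> - 1 < (\<Sum>n<N. 1 - \<bar>u n s\<bar>)"
  proof (rule compact_sum_eventually_exceeds[OF compact])
    show "continuous_on UNIV (\<lambda>s. 1 - \<bar>u n s\<bar>)" for n
      by (intro continuous_intros)
    show "0 \<le> 1 - \<bar>u n s\<bar>" for n s
      using abs_apply_bcontfun_le_norm[of "u n" s] u_norm[of n] by linarith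
    show "continuous_on UNIV (\<lambda>s. M * \<bar>g s\<bar> - 1)"
      by (intro continuous_intros)
    show "\<exists>c>0. \<forall>n. c \<le> 1 - \<bar>u n s\<bar>" if "0 \<le> M * \<bar>g s\<bar> - 1" for s
      using that by (intro gap) auto
  qed
  then obtain N where N: "\<And>s. M * \<bar>g s\<bar> - 1 < (\<Sum>n<N. 1 - \<bar>u n s\<bar>)"
    by blast
  have "M * blinfun_apply y g = blinfun_apply y (M *\<^sub>R g)"
    by (simp add: blinfun.scaleR_right)
  also have "\<dots> \<le> (\<Sum>n<N. norm y - blinfun_apply y (u n)) + norm y"
  proof (rule blinfun_le_sum_gaps[OF compact u_norm])
    show "\<bar>(M *\<^sub>R g) s\<bar> \<le> (\<Sum>n<N. 1 - \<bar>u n s\<bar>) + 1" for s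
      using N[of s] \<open>M > 0\<close> by (simp add: abs_mult)
  qed
  also have "\<dots> \<le> (\<Sum>n<N. (1/2)^Suc n) + norm y"
  proof -
    have "norm y - blinfun_apply y (u n) \<le> (1/2)^Suc n" for n
      using u_norming[of n] by linarith
    then show ?thesis
      by (intro add_mono sum_mono) auto
  qed
  also have "\<dots> \<le> 1 + norm y"
  proof -
    have "(\<Sum>n<N. (1/2::real)^Suc n) = 1 - (1/2)^N"
      by (induction N) (auto simp: algebra_simps)
    moreover have "(0::real) \<le> (1/2)^N"
      by simp
    ultimately show ?thesis
      by linarith
  qed
  finally show ?thesis .
qed

lemma norming_sequence_nonpos:
  fixes y :: "('b::topological_space, real) bcontfun \<Rightarrow>\<^sub>L real"
    and u :: "nat \<Rightarrow> ('b, real) bcontfun" and g :: "('b, real) bcontfun"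
  assumes "compact (UNIV::'b set)" and "\<And>n. norm (u n) \<le> 1"
    and "\<And>n. norm y - (1/2)^Suc n < blinfun_apply y (u n)"
    and "\<And>s. g s \<noteq> 0 \<Longrightarrow> \<exists>c>0. \<forall>n. c \<le> 1 - \<bar>u n s\<bar>"
  shows "blinfun_apply y g \<le> 0"
proof (rule ccontr)
  assume "\<not> blinfun_apply y g \<le> 0"
  then have pos: "blinfun_apply y g > 0"
    by simp
  have "(2 + norm y) / blinfun_apply y g * blinfun_apply y g \<le> 1 + norm y"
    by (rule norming_sequence_scaled_le[OF assms]) (use pos in \<open>auto intro!: divide_pos_pos add_pos_nonneg\<close>)
  then show False
    using pos by simp
qed

context compact_isometric_embedding
begin

lemma norm_preserving_extension_annihilates:
  fixes g :: "('b, real) bcontfun"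
  assumes ext: "norm_preserving_extension T x' y"
    and gap: "\<And>s. g s \<noteq> 0 \<Longrightarrow> norm (FT T s) < 1"
  shows "blinfun_apply y g = 0"
proof -
  have "\<forall>n. \<exists>f. norm f \<le> 1 \<and> norm x' - (1/2)^Suc n < blinfun_apply x' f"
    by (simp add: blinfun_almost_attains_norm)
  then obtain f where f_norm: "\<And>n. norm (f n) \<le> 1"
    and f_norming: "\<And>n. norm x' - (1/2)^Suc n < blinfun_apply x' (f n)"
    by metis
  define u where "u n = T (f n)" for n
  have u_norm: "norm (u n) \<le> 1" for n
    using f_norm by (simp add: u_def)
  have u_norming: "norm y - (1/2)^Suc n < blinfun_apply y (u n)" for n
    using f_norming[of n] ext by (simp add: u_def norm_preserving_extension_def fun_eq_iff)
  have u_gap: "\<exists>c>0. \<forall>n. c \<le> 1 - \<bar>u n s\<bar>" if "norm (FT T s) < 1" for s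
  proof (intro exI conjI allI)
    show "0 < 1 - norm (FT T s)"
      using that by simp
    fix n
    have "\<bar>u n s\<bar> = \<bar>blinfun_apply (FT T s) (f n)\<bar>"
      by (simp add: u_def)
    also have "\<dots> \<le> norm (FT T s) * norm (f n)"
      using norm_blinfun[of "FT T s" "f n"] by simp
    also have "\<dots> \<le> norm (FT T s)"
      using f_norm[of n] by (simp add: mult_left_le)
    finally show "1 - norm (FT T s) \<le> 1 - \<bar>u n s\<bar>"
      by simp
  qed
  have "blinfun_apply y r \<le> 0" if r: "\<And>s. r s \<noteq> 0 \<Longrightarrow> g s \<noteq> 0" for r :: "('b, real) bcontfun"
  proof (rule norming_sequence_nonpos[where u=u])
    show "compact (UNIV::'b set)"
      by (rule compact_codom)
    show "norm (u n) \<le> 1" "norm y - (1/2)^Suc n < blinfun_apply y (u n)" for n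
      by (rule u_norm, rule u_norming)
    show "\<exists>c>0. \<forall>n. c \<le> 1 - \<bar>u n s\<bar>" if "r s \<noteq> 0" for s
      by (rule u_gap, rule gap, rule r, rule that)
  qed
  from this[of g] this[of "- g"] show ?thesis
    by (simp add: blinfun.minus_right)
qed

lemma norm_preserving_extension_eq_weighted_comp_adjoint:
  assumes cont_h: "continuous_on UNIV h" and cont_e: "continuous_on UNIV e"
    and abs_e: "\<And>k. \<bar>e k\<bar> = 1" and T_at_h: "\<And>f k. T f (h k) = e k * f k"
    and off: "\<And>s. s \<notin> range h \<Longrightarrow> norm (FT T s) < 1"
    and ext: "norm_preserving_extension T x' y"
  shows "y = weighted_comp_adjoint h e x'"
proof (rule blinfun_eqI)
  fix g
  define r where "r = g - T (weighted_comp h e g)"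
  have r_h: "r (h k) = 0" for k
    using abs_e[of k] abs_mult_self_eq[of "e k"]
    by (simp add: r_def T_at_h weighted_comp_apply[OF compact_dom cont_h cont_e abs_e] mult.assoc[symmetric])
  have "norm (FT T s) < 1" if "r s \<noteq> 0" for s
    using that r_h by (intro off) auto
  then have "blinfun_apply y r = 0"
    by (rule norm_preserving_extension_annihilates[OF ext])
  moreover have "blinfun_apply y (T (weighted_comp h e g)) = blinfun_apply x' (weighted_comp h e g)"
    using ext by (simp add: norm_preserving_extension_def fun_eq_iff)
  ultimately show "blinfun_apply y g = blinfun_apply (weighted_comp_adjoint h e x') g"
    by (simp add: r_def blinfun.diff_right weighted_comp_adjoint_apply[OF compact_dom cont_h cont_e abs_e])
qed

theorem U_representation_imp_U_embedding:
  assumes "U_representation T S0 h \<epsilon>"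
  shows "U_embedding T"
proof -
  from assms obtain g0 where hom: "homeomorphism UNIV S0 h g0" and cont_e: "continuous_on UNIV \<epsilon>"
    and sign: "\<And>k. \<epsilon> k \<in> {-1, 1}" and FT_h: "\<And>k. FT T (h k) = \<epsilon> k *\<^sub>R dirac k"
    and off: "\<And>s. s \<notin> S0 \<Longrightarrow> norm (FT T s) < 1"
    unfolding U_representation_def by blast
  have cont_h: "continuous_on UNIV h" and range_h: "range h = S0"
    using hom by (auto simp: homeomorphism_def)
  have abs_e: "\<bar>\<epsilon> k\<bar> = 1" for k
    using sign[of k] by auto
  have T_at_h: "T f (h k) = \<epsilon> k * f k" for f k
    using FT_h[of k] by (simp add: FT_eq_scaleR_dirac_iff)
  have off_range: "norm (FT T s) < 1" if "s \<notin> range h" for s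
    using that range_h off by blast
  have "\<exists>!y. norm_preserving_extension T x' y" for x'
  proof (rule ex1I)
    show "norm_preserving_extension T x' (weighted_comp_adjoint h \<epsilon> x')"
      using compact_dom cont_h cont_e abs_e T_at_h isometry
      by (rule norm_preserving_extension_weighted_comp_adjoint)
    show "y = weighted_comp_adjoint h \<epsilon> x'" if "norm_preserving_extension T x' y" for y
      using cont_h cont_e abs_e T_at_h off_range that
      by (rule norm_preserving_extension_eq_weighted_comp_adjoint)
  qed
  then show ?thesis
    using isometry by (simp add: U_embedding_iff)
qed

end

theorem theorem6p15:
  fixes T :: "('a::t2_space, real) bcontfun \<Rightarrow> ('b::t2_space, real) bcontfun"
  assumes "compact (UNIV :: 'a set)" and "compact (UNIV :: 'b set)"
    and "linear_isometry T"
  shows "U_embedding T \<longleftrightarrow>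
    (\<exists>(S0 :: 'b set) (h :: 'a \<Rightarrow> 'b) (\<epsilon> :: 'a \<Rightarrow> real).
       closed S0 \<and> (\<exists>g. homeomorphism UNIV S0 h g) \<and>
       continuous_on UNIV \<epsilon> \<and> (\<forall>k. \<epsilon> k \<in> {-1, 1}) \<and>
       (\<forall>k. FT T (h k) = \<epsilon> k *\<^sub>R dirac k) \<and>
       (\<forall>s \<in> UNIV - S0. norm (FT T s) < 1))"
proof -
  interpret compact_isometric_embedding T
    by unfold_locales (rule assms)+
  show ?thesis
    unfolding U_representation_def[symmetric]
  proof
    assume "U_embedding T"
    then show "\<exists>S0 h \<epsilon>. U_representation T S0 h \<epsilon>"
      by (rule U_embedding_imp_U_representation)
  next
    assume "\<exists>S0 h \<epsilon>. U_representation T S0 h \<epsilon>"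
    then show "U_embedding T"
      by (elim exE) (rule U_representation_imp_U_embedding)
  qed
qed

end
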